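(* Let $\gamma>0$. For any dimension $d>0$ and any $\delta>0$ there exists a ReLU neural network $\mathcal N:\mathbb{R}^d\to\mathbb{R}$ with 4 hidden layers, width $\mathcal O(d^{5/3+\gamma})$ and magnitude of weights at most $1/\delta$, such that: (i) for every entirely non-zero $\mathbf{x}\in\mathcal S^d_\delta$ for which the following success condition holds, $\mathcal N(\mathbf{x})=\operatorname{med}(\mathbf{x})$; (ii) for every $\mathbf{x}\in[0,1]^d$, $\mathcal N(\mathbf{x})\in[-d^2,d^2]$. Success condition: partition the entries of $\mathbf{x}$ into consecutive blocks $\mathbf{x}_1,\dots,\mathbf{x}_q$ of size $\lceil d^{2/3}\rceil$ (the last possibly smaller); for $i\in[q-1]$ let $\mathbf{y}_i$ consist of the elements of $\mathbf{x}_i$ with ranks within $\mathbf{x}_i$ in $\{\lfloor \frac{d^{2/3}}{2}-d^{\frac13+\gamma}\rfloor,\dots,\lceil \frac{d^{2/3}}{2}+d^{\frac13+\gamma}\rceil\}$ and $\mathbf{y}_q=\mathbf{x}_q$; the condition is that some $\mathbf{y}_i$ contains $\operatorname{med}(\mathbf{x})$.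
   Context: $\mathcal S^d_\delta$ is the set of vectors $\mathbf{x}\in\mathbb{R}^d$ whose non-zero entries all lie in $[\delta,1-\delta]$ and are pairwise at distance at least $\delta$. $\operatorname{med}(\mathbf{x})$ denotes the median of the entries of $\mathbf{x}$ (the element of rank $d/2$). A ReLU network applies $[z]_+=\max\{0,z\}$ after each affine hidden map, with an affine output layer; width is the number of neurons in the largest hidden layer. *)

theory Defs
  imports "HOL-Analysis.Analysis"
begin

text \<open>Vectors in R^d are functions nat => real, only indices i < d matter.\<close>

text \<open>A hidden layer: (output width n, weight matrix W (W j i, j<n, i<input dim), bias b).\<close>
type_synonym layer = "nat \<times> (nat \<Rightarrow> nat \<Rightarrow> real) \<times> (nat \<Rightarrow> real)"

text \<open>A ReLU network: list of hidden layers and an affine output layer (w, c) to R.\<close>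
type_synonym relu_net = "layer list \<times> (nat \<Rightarrow> real) \<times> real"

definition relu :: "real \<Rightarrow> real" where
  "relu z = max 0 z"

fun hidden_eval :: "nat \<Rightarrow> layer list \<Rightarrow> (nat \<Rightarrow> real) \<Rightarrow> (nat \<Rightarrow> real)" where
  "hidden_eval m [] x = x"
| "hidden_eval m ((n, W, b) # Ls) x =
     hidden_eval n Ls (\<lambda>j. if j < n then relu ((\<Sum>i<m. W j i * x i) + b j) else 0)"

fun out_dim :: "nat \<Rightarrow> layer list \<Rightarrow> nat" where
  "out_dim m [] = m"
| "out_dim m ((n, W, b) # Ls) = out_dim n Ls"

definition net_eval :: "nat \<Rightarrow> relu_net \<Rightarrow> (nat \<Rightarrow> real) \<Rightarrow> real" where
  "net_eval d N x =
     (case N of (Ls, w, c) \<Rightarrow> (\<Sum>i<out_dim d Ls. w i * hidden_eval d Ls x i) + c)"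

definition hidden_layers :: "relu_net \<Rightarrow> layer list" where
  "hidden_layers N = fst N"

definition net_width :: "relu_net \<Rightarrow> nat" where
  "net_width N = Max (insert 0 (set (map fst (fst N))))"

fun layers_bounded :: "nat \<Rightarrow> layer list \<Rightarrow> real \<Rightarrow> bool" where
  "layers_bounded m [] B = True"
| "layers_bounded m ((n, W, b) # Ls) B =
     ((\<forall>j<n. \<forall>i<m. \<bar>W j i\<bar> \<le> B) \<and> (\<forall>j<n. \<bar>b j\<bar> \<le> B) \<and> layers_bounded n Ls B)"

definition weights_bounded :: "nat \<Rightarrow> relu_net \<Rightarrow> real \<Rightarrow> bool" where
  "weights_bounded d N B =
     (case N of (Ls, w, c) \<Rightarrow>
        layers_bounded d Ls B \<and> (\<forall>i<out_dim d Ls. \<bar>w i\<bar> \<le> B) \<and> \<bar>c\<bar> \<le> B)"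

definition in_S :: "nat \<Rightarrow> real \<Rightarrow> (nat \<Rightarrow> real) \<Rightarrow> bool" where
  "in_S d \<delta> x =
     ((\<forall>i<d. x i \<noteq> 0 \<longrightarrow> \<delta> \<le> x i \<and> x i \<le> 1 - \<delta>) \<and>
      (\<forall>i<d. \<forall>j<d. i \<noteq> j \<and> x i \<noteq> 0 \<and> x j \<noteq> 0 \<longrightarrow> \<bar>x i - x j\<bar> \<ge> \<delta>))"

definition rank_in :: "nat set \<Rightarrow> (nat \<Rightarrow> real) \<Rightarrow> real \<Rightarrow> nat" where
  "rank_in I x v = card {j \<in> I. x j \<le> v}"

definition median :: "nat \<Rightarrow> (nat \<Rightarrow> real) \<Rightarrow> real" where
  "median d x = (THE v. (\<exists>i<d. x i = v) \<and> rank_in {..<d} x v = nat \<lceil>real d / 2\<rceil>)"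

definition block_size :: "nat \<Rightarrow> nat" where
  "block_size d = nat \<lceil>real d powr (2/3)\<rceil>"

definition num_blocks :: "nat \<Rightarrow> nat" where
  "num_blocks d = nat \<lceil>real d / real (block_size d)\<rceil>"

definition block :: "nat \<Rightarrow> nat \<Rightarrow> nat set" where
  "block d k = {k * block_size d ..< min d ((k + 1) * block_size d)}"

definition y_block :: "real \<Rightarrow> nat \<Rightarrow> (nat \<Rightarrow> real) \<Rightarrow> nat \<Rightarrow> real set" where
  "y_block \<gamma> d x k =
     (if k + 1 = num_blocks d then x ` block d k
      else x ` {i \<in> block d k.
             \<lfloor>real d powr (2/3) / 2 - real d powr (1/3 + \<gamma>)\<rfloor> \<le> int (rank_in (block d k) x (x i)) \<and>
             int (rank_in (block d k) x (x i)) \<le> \<lceil>real d powr (2/3) / 2 + real d powr (1/3 + \<gamma>)\<rceil>})"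

definition success_cond :: "real \<Rightarrow> nat \<Rightarrow> (nat \<Rightarrow> real) \<Rightarrow> bool" where
  "success_cond \<gamma> d x = (\<exists>k < num_blocks d. median d x \<in> y_block \<gamma> d x k)"

end

(* Entries of an admissible input lie in [delta, 1 - delta] and are pairwise delta apart, so
   clamp01 ((u - v) / delta) is exactly the comparison [v < u], and ReLU layers can compute ranks
   exactly. Layer 1 compares every entry with all entries of its block. Layer 2 adds these
   comparisons up to within-block ranks and, for every candidate (block, rank) pair allowed by the
   success condition, selects the entry of that rank with the gate relu_gate c t, which is c at
   t = 0 and 0 at every other integer t. Layer 3 compares each candidate value with all d entries,
   which yields its global rank, and layer 4 gates each candidate value on that rank being
   ceil (d / 2); the output sums the gates, so only the median survives. The window holds
   O(d^(1/3 + gamma)) ranks in each of O(d^(1/3)) blocks, hence there are O(d^(2/3 + gamma))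
   candidates and layer 3 has O(d^(5/3 + gamma)) neurons. Every gate lies in [0, 1], which bounds
   the output on all inputs. For delta * d > 1 there is no admissible input, and the zero network
   does the job. *)

theory Submission
  imports Defs
begin

lemma sum_lessThan_add:
  fixes f :: "nat \<Rightarrow> 'a::comm_monoid_add"
  shows "(\<Sum>i<m + n. f i) = (\<Sum>i<m. f i) + (\<Sum>i<n. f (m + i))"
  by (induction n) (simp_all add: add.assoc)

lemma sum_lessThan_mult_regroup:
  fixes f :: "nat \<Rightarrow> 'a::comm_monoid_add"
  shows "(\<Sum>i<n * k. f i) = (\<Sum>a<n. \<Sum>t<k. f (a * k + t))"
proof (induction n)
  case (Suc n)
  have "(\<Sum>i<Suc n * k. f i) = (\<Sum>i<n * k + k. f i)"
    by (simp add: add.commute)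
  also have "\<dots> = (\<Sum>i<n * k. f i) + (\<Sum>t<k. f (n * k + t))"
    by (rule sum_lessThan_add)
  finally show ?case
    using Suc by simp
qed simp

lemma sum_lessThan_2: "(\<Sum>s<2::nat. f s) = f 0 + (f 1 :: 'a::comm_monoid_add)"
  by (simp add: numeral_2_eq_2)

lemma sum_delta_mult:
  fixes z :: "nat \<Rightarrow> real"
  shows "(\<Sum>i<m. (if i = a then c else 0) * z i) = (if a < m then c * z a else 0)"
proof -
  have "(\<Sum>i<m. (if i = a then c else 0) * z i) = (\<Sum>i<m. if i = a then c * z a else 0)"
    by (intro sum.cong) auto
  then show ?thesis by simp
qed

lemma sum_select_group:
  fixes z :: "nat \<Rightarrow> real"
  assumes "g < n"
  shows "(\<Sum>i<n * k. (if i div k = g then c (i mod k) else 0) * z i) = (\<Sum>u<k. c u * z (g * k + u))"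
proof -
  have "(\<Sum>i<n * k. (if i div k = g then c (i mod k) else 0) * z i)
      = (\<Sum>a<n. \<Sum>u<k. (if a = g then c u * z (a * k + u) else 0))"
    by (subst sum_lessThan_mult_regroup) (intro sum.cong refl; simp)
  also have "\<dots> = (\<Sum>a<n. if a = g then (\<Sum>u<k. c u * z (a * k + u)) else 0)"
    by (intro sum.cong refl) simp
  also have "\<dots> = (\<Sum>u<k. c u * z (g * k + u))"
    using assms by simp
  finally show ?thesis .
qed

lemma pair_index_less: "a < n \<Longrightarrow> u < k \<Longrightarrow> a * k + u < n * (k::nat)"
proof -
  assume "a < n" "u < k"
  then have "a * k + u < Suc a * k" by simp
  also have "\<dots> \<le> n * k" using \<open>a < n\<close> by (intro mult_le_mono1) simp
  finally show ?thesis .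
qed

lemma pair_index_div_mod: "u < k \<Longrightarrow> (a * k + u) div k = a \<and> (a * k + u) mod k = (u::nat)"
  by simp

section \<open>ReLU gadgets\<close>

definition clamp01 :: "real \<Rightarrow> real" where
  "clamp01 z = relu z - relu (z - 1)"

lemma clamp01_bounds: "0 \<le> clamp01 z" "clamp01 z \<le> 1"
  by (auto simp: clamp01_def relu_def)

lemma clamp01_eq_self: "0 \<le> z \<Longrightarrow> z \<le> 1 \<Longrightarrow> clamp01 z = z"
  by (simp add: clamp01_def relu_def)

lemma clamp01_separated_step:
  assumes "0 < \<delta>" and "D = 0 \<or> \<delta> \<le> \<bar>D\<bar>"
  shows "clamp01 (D / \<delta>) = of_bool (0 < D)"
proof -
  consider "D = 0" | "\<delta> \<le> D" | "D \<le> - \<delta>"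
    using assms(2) by linarith
  then show ?thesis
  proof cases
    case 2
    then have "1 \<le> D / \<delta>" using assms(1) by simp
    then show ?thesis using 2 assms(1) by (simp add: clamp01_def relu_def)
  next
    case 3
    then have "D / \<delta> \<le> 0" using assms(1) by (simp add: divide_nonpos_pos)
    then show ?thesis using 3 assms(1) by (simp add: clamp01_def relu_def)
  qed (simp add: clamp01_def relu_def)
qed

definition relu_gate :: "real \<Rightarrow> real \<Rightarrow> real" where
  "relu_gate c t = relu (c - t) + relu (c + t) - relu t - relu (- t) - relu c"

definition gate_in_c :: "nat \<Rightarrow> real" where
  "gate_in_c k = (if k = 2 \<or> k = 3 then 0 else 1)"

definition gate_in_t :: "nat \<Rightarrow> real" where
  "gate_in_t k = (if k = 0 \<or> k = 3 then -1 else if k = 4 then 0 else 1)"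

definition gate_out :: "nat \<Rightarrow> real" where
  "gate_out k = (if k \<le> 1 then 1 else -1)"

lemma gate_coeff_bounds: "\<bar>gate_in_c k\<bar> \<le> 1" "\<bar>gate_in_t k\<bar> \<le> 1" "\<bar>gate_out k\<bar> = 1"
  by (simp_all add: gate_in_c_def gate_in_t_def gate_out_def)

lemma relu_gate_units:
  "(\<Sum>k<5. gate_out k * relu (gate_in_c k * c + gate_in_t k * t)) = relu_gate c t"
  by (simp add: numeral_eq_Suc gate_out_def gate_in_c_def gate_in_t_def relu_gate_def)

lemma relu_gate_bounds:
  assumes "0 \<le> c"
  shows "0 \<le> relu_gate c t" "relu_gate c t \<le> c"
  using assms by (auto simp: relu_gate_def relu_def)

lemma relu_gate_of_int:
  assumes "0 \<le> c" "c \<le> 1"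
  shows "relu_gate c (of_int k) = (if k = 0 then c else 0)"
proof -
  consider "k = 0" | "1 \<le> k" | "k \<le> -1" by linarith
  then show ?thesis
  proof cases
    case 2
    then have "1 \<le> real_of_int k" by simp
    then show ?thesis using 2 assms by (simp add: relu_gate_def relu_def)
  next
    case 3
    then have "real_of_int k \<le> -1" by simp
    then show ?thesis using 3 assms by (simp add: relu_gate_def relu_def)
  qed (use assms in \<open>simp add: relu_gate_def relu_def\<close>)
qed

definition relu_layer :: "nat \<Rightarrow> nat \<Rightarrow> (nat \<Rightarrow> nat \<Rightarrow> real) \<Rightarrow> (nat \<Rightarrow> real) \<Rightarrow> (nat \<Rightarrow> real) \<Rightarrow> nat \<Rightarrow> real" where
  "relu_layer n m W b y = (\<lambda>j. if j < n then relu ((\<Sum>i<m. W j i * y i) + b j) else 0)"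

lemma relu_layer_apply: "j < n \<Longrightarrow> relu_layer n m W b y j = relu ((\<Sum>i<m. W j i * y i) + b j)"
  by (simp add: relu_layer_def)

definition zero_network :: relu_net where
  "zero_network = (replicate 4 (0, \<lambda>j i. 0, \<lambda>j. 0), \<lambda>i. 0, 0)"

lemma zero_network_simps:
  "length (hidden_layers zero_network) = 4"
  "net_width zero_network = 0"
  "0 \<le> B \<Longrightarrow> weights_bounded d zero_network B"
  "net_eval d zero_network x = 0"
  by (simp_all add: zero_network_def hidden_layers_def net_width_def weights_bounded_def
      net_eval_def numeral_eq_Suc)

section \<open>Ranks, medians and separated inputs\<close>

lemma rank_in_strict_mono:
  assumes "finite I" "j \<in> I" "v < x j"
  shows "rank_in I x v < rank_in I x (x j)"
proof -
  have "{i\<in>I. x i \<le> v} \<subseteq> {i\<in>I. x i \<le> x j}"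
    using assms(3) by auto
  moreover have "j \<in> {i\<in>I. x i \<le> x j} - {i\<in>I. x i \<le> v}"
    using assms(2,3) by auto
  ultimately have "{i\<in>I. x i \<le> v} \<subset> {i\<in>I. x i \<le> x j}"
    by blast
  then show ?thesis
    unfolding rank_in_def using assms(1) by (intro psubset_card_mono) auto
qed

lemma rank_in_inj:
  assumes "finite I" "i \<in> I" "j \<in> I" "rank_in I x (x i) = rank_in I x (x j)"
  shows "x i = x j"
  using rank_in_strict_mono[OF assms(1) assms(2), of "x j" x]
    rank_in_strict_mono[OF assms(1) assms(3), of "x i" x] assms(4)
  by (cases "x i" "x j" rule: linorder_cases) auto

lemma rank_in_ge1:
  assumes "finite I" "i \<in> I"
  shows "1 \<le> rank_in I x (x i)"
  using assms unfolding rank_in_def by (auto simp: Suc_le_eq card_gt_0_iff)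

lemma rank_in_le_card: "finite I \<Longrightarrow> rank_in I x v \<le> card I"
  unfolding rank_in_def by (intro card_mono) auto

lemma rank_in_eq_Suc_card_less:
  assumes "finite I" "inj_on x I" "e \<in> I"
  shows "rank_in I x (x e) = Suc (card {j\<in>I. x j < x e})"
proof -
  have "{j\<in>I. x j \<le> x e} = insert e {j\<in>I. x j < x e}"
    using assms(2,3) by (force simp: inj_on_def order_le_less)
  then show ?thesis
    unfolding rank_in_def using assms(1) by simp
qed

lemma rank_in_image:
  assumes "finite I" "inj_on x I"
  shows "(\<lambda>i. rank_in I x (x i)) ` I = {1..card I}"
proof (rule card_subset_eq)
  show "(\<lambda>i. rank_in I x (x i)) ` I \<subseteq> {1..card I}"
    using assms(1) rank_in_ge1 rank_in_le_card by fastforce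
  have "inj_on (\<lambda>i. rank_in I x (x i)) I"
    using assms rank_in_inj by (fastforce simp: inj_on_def)
  then show "card ((\<lambda>i. rank_in I x (x i)) ` I) = card {1..card I}"
    by (simp add: card_image)
qed simp

lemma median_eqI:
  assumes "i < d" "rank_in {..<d} x (x i) = nat \<lceil>real d / 2\<rceil>"
  shows "median d x = x i"
  unfolding median_def
proof (rule the_equality)
  fix v assume "(\<exists>j<d. x j = v) \<and> rank_in {..<d} x v = nat \<lceil>real d / 2\<rceil>"
  then obtain j where "j < d" "x j = v" "rank_in {..<d} x (x j) = nat \<lceil>real d / 2\<rceil>"
    by blast
  then show "v = x i"
    using rank_in_inj[of "{..<d}" j i x] assms by simp
qed (use assms in blast)

lemma median_index_exists:
  assumes "0 < d" "inj_on x {..<d}"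
  shows "\<exists>i<d. rank_in {..<d} x (x i) = nat \<lceil>real d / 2\<rceil>"
proof -
  have "1 \<le> nat \<lceil>real d / 2\<rceil>" "nat \<lceil>real d / 2\<rceil> \<le> d"
    using assms(1) by linarith+
  then have "nat \<lceil>real d / 2\<rceil> \<in> (\<lambda>i. rank_in {..<d} x (x i)) ` {..<d}"
    using rank_in_image[of "{..<d}" x] assms(2) by simp
  then show ?thesis by auto
qed

lemma separated_card_bound:
  fixes V :: "real set"
  assumes "finite V" "card V = Suc n" "V \<subseteq> {a..b}"
    and "\<forall>u\<in>V. \<forall>v\<in>V. u \<noteq> v \<longrightarrow> \<delta> \<le> \<bar>u - v\<bar>"
  shows "real n * \<delta> \<le> b - a"
  using assms
proof (induction n arbitrary: V b)
  case 0
  then obtain v where "V = {v}" by (metis One_nat_def card_1_singletonE)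
  then show ?case using 0 by auto
next
  case (Suc n)
  define m where "m = Max V"
  have "V \<noteq> {}" using Suc.prems(2) by auto
  then have m: "m \<in> V" "m \<le> b"
    unfolding m_def using Suc.prems(1,3) by auto
  have "V - {m} \<subseteq> {a..m - \<delta>}"
  proof
    fix v assume v: "v \<in> V - {m}"
    then have "v \<le> m"
      unfolding m_def using Suc.prems(1) by simp
    moreover have "\<delta> \<le> \<bar>v - m\<bar>" "a \<le> v"
      using v Suc.prems(3,4) m(1) by auto
    ultimately
    show "v \<in> {a..m - \<delta>}" by simp
  qed
  moreover have "card (V - {m}) = Suc n"
    using Suc.prems(1,2) m(1) by simp
  ultimately have "real n * \<delta> \<le> (m - \<delta>) - a"
    using Suc.IH[of "V - {m}"] Suc.prems(1,4) by blast
  then show ?case using m(2) by (simp add: algebra_simps)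
qed

lemma in_S_nonzero_inj:
  assumes "0 < \<delta>" "in_S d \<delta> x" "\<forall>i<d. x i \<noteq> 0"
  shows "inj_on x {..<d}"
  using assms unfolding in_S_def inj_on_def by force

lemma in_S_nonzero_delta_bound:
  assumes "0 < d" "0 < \<delta>" "in_S d \<delta> x" "\<forall>i<d. x i \<noteq> 0"
  shows "\<delta> * real d \<le> 1"
proof -
  have "card (x ` {..<d}) = Suc (d - 1)"
    using card_image[OF in_S_nonzero_inj[OF assms(2-4)]] assms(1) by simp
  moreover have "x ` {..<d} \<subseteq> {\<delta>..1 - \<delta>}"
    using assms(3,4) unfolding in_S_def by auto
  moreover have "\<forall>u\<in>x ` {..<d}. \<forall>v\<in>x ` {..<d}. u \<noteq> v \<longrightarrow> \<delta> \<le> \<bar>u - v\<bar>"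
    using assms(3,4) unfolding in_S_def by auto
  ultimately have "real (d - 1) * \<delta> \<le> (1 - \<delta>) - \<delta>"
    by (intro separated_card_bound) auto
  then show ?thesis
    using assms(1,2) by (simp add: of_nat_diff algebra_simps)
qed

lemma block_size_pos: "0 < d \<Longrightarrow> 0 < block_size d"
proof -
  assume "0 < d"
  then have "0 < real d powr (2/3)" by simp
  then show ?thesis unfolding block_size_def by linarith
qed

lemma block_size_le: "block_size d \<le> d"
proof (cases "d = 0")
  case False
  then have "real d powr (2/3) \<le> real d powr 1"
    by (intro powr_mono) auto
  then show ?thesis unfolding block_size_def by (simp add: ceiling_le_iff)
qed (simp add: block_size_def)

lemma block_size_bounds:
  "real d powr (2/3) \<le> real (block_size d)" "real (block_size d) \<le> real d powr (2/3) + 1"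
  unfolding block_size_def by (simp_all add: of_int_ceiling_le_add_one)

lemma num_blocks_bounds:
  "real d / real (block_size d) \<le> real (num_blocks d)"
  "real (num_blocks d) < real d / real (block_size d) + 1"
  using ceiling_correct[of "real d / real (block_size d)"]
  unfolding num_blocks_def by auto

lemma num_blocks_pos: "0 < d \<Longrightarrow> 1 \<le> num_blocks d"
proof -
  assume d: "0 < d"
  then have "0 < real d / real (block_size d)"
    using block_size_pos by simp
  then show ?thesis
    using num_blocks_bounds(1)[of d] by linarith
qed

lemma num_blocks_mult_less: "0 < d \<Longrightarrow> num_blocks d * block_size d < d + block_size d"
proof -
  assume d: "0 < d"
  have "real (num_blocks d) * real (block_size d) < (real d / real (block_size d) + 1) * real (block_size d)"
    using num_blocks_bounds(2)[of d] block_size_pos[OF d] by (intro mult_strict_right_mono) auto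
  also have "\<dots> = real d + real (block_size d)"
    using block_size_pos[OF d] by (simp add: field_simps)
  finally have "real (num_blocks d * block_size d) < real (d + block_size d)"
    by simp
  then show ?thesis by (simp only: of_nat_less_iff)
qed

lemma mem_block_iff: "0 < d \<Longrightarrow> j \<in> block d k \<longleftrightarrow> j < d \<and> j div block_size d = k"
  using block_size_pos[of d]
  by (auto simp: block_def div_nat_eqI algebra_simps
      intro: dividend_less_times_div[THEN less_le_trans] div_times_less_eq_dividend[THEN le_trans])

lemma finite_block: "finite (block d k)"
  by (simp add: block_def)

lemma card_block_le: "card (block d k) \<le> block_size d"
  unfolding block_def by simp

section \<open>The network\<close>

locale median_net =
  fixes \<gamma> :: real and d :: nat and \<delta> :: real
  assumes gamma_pos: "0 < \<gamma>" and d_pos: "0 < d" and delta_pos: "0 < \<delta>"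
begin

abbreviation bs :: nat where "bs \<equiv> block_size d"
abbreviation nb :: nat where "nb \<equiv> num_blocks d"

definition rank_lo :: int where
  "rank_lo = \<lfloor>real d powr (2/3) / 2 - real d powr (1/3 + \<gamma>)\<rfloor>"

definition rank_hi :: int where
  "rank_hi = \<lceil>real d powr (2/3) / 2 + real d powr (1/3 + \<gamma>)\<rceil>"

definition win_lo :: int where
  "win_lo = max 1 rank_lo"

definition win_hi :: int where
  "win_hi = min (int bs) rank_hi"

definition win_len :: nat where
  "win_len = nat (win_hi - win_lo + 1)"

text \<open>Candidate \<open>p < ncand\<close> stands for the entry of rank \<open>cand_rank p\<close> within block
  \<open>cand_block p\<close>: every rank of the window (clipped to \<open>1..bs\<close>) in each of the first \<open>nb - 1\<close>
  blocks, and every rank in the last block.\<close>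

definition ncand :: nat where
  "ncand = (nb - 1) * win_len + bs"

definition cand_block :: "nat \<Rightarrow> nat" where
  "cand_block p = (if p < (nb - 1) * win_len then p div win_len else nb - 1)"

definition cand_rank :: "nat \<Rightarrow> nat" where
  "cand_rank p = (if p < (nb - 1) * win_len then nat win_lo + p mod win_len
                  else p - (nb - 1) * win_len + 1)"

lemma bs_pos: "0 < bs"
  using block_size_pos[OF d_pos] .

lemma nb_pos: "1 \<le> nb"
  using num_blocks_pos[OF d_pos] .

lemma mem_block: "j \<in> block d k \<longleftrightarrow> j < d \<and> j div bs = k"
  using mem_block_iff[OF d_pos] .

lemma win_len_le: "win_len \<le> bs"
  unfolding win_len_def win_lo_def win_hi_def by simp

lemma ncand_le: "ncand \<le> nb * bs"
proof -
  have "ncand \<le> (nb - 1) * bs + bs"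
    unfolding ncand_def using win_len_le by simp
  also have "\<dots> = nb * bs"
    using nb_pos by (cases nb) auto
  finally show ?thesis .
qed

lemma cand_rank_bounds:
  assumes "p < ncand"
  shows "1 \<le> cand_rank p" "cand_rank p \<le> bs"
proof -
  show "1 \<le> cand_rank p"
    by (auto simp: cand_rank_def win_lo_def)
  show "cand_rank p \<le> bs"
  proof (cases "p < (nb - 1) * win_len")
    case True
    then have "0 < win_len" by (cases win_len) auto
    then have "int win_len = win_hi - win_lo + 1" "p mod win_len < win_len"
      unfolding win_len_def by auto
    moreover have "1 \<le> win_lo" by (simp add: win_lo_def)
    ultimately have "int (nat win_lo + p mod win_len) \<le> win_hi"
      by linarith
    then have "nat win_lo + p mod win_len \<le> bs"
      unfolding win_hi_def by linarith
    then show ?thesis using True by (simp add: cand_rank_def)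
  next
    case False
    then show ?thesis using assms by (auto simp: cand_rank_def ncand_def)
  qed
qed

lemma cand_inj:
  assumes "cand_block p = cand_block q" "cand_rank p = cand_rank q"
  shows "p = q"
proof -
  have window_block: "p div win_len < nb - 1" if "p < (nb - 1) * win_len" for p
    using that by (simp add: less_mult_imp_div_less)
  consider "p < (nb - 1) * win_len" "q < (nb - 1) * win_len"
    | "\<not> p < (nb - 1) * win_len" "\<not> q < (nb - 1) * win_len"
    | "p < (nb - 1) * win_len \<longleftrightarrow> \<not> q < (nb - 1) * win_len"
    by blast
  then show ?thesis
  proof cases
    case 1
    then have "p div win_len = q div win_len" "p mod win_len = q mod win_len"
      using assms by (simp_all add: cand_block_def cand_rank_def)
    then show ?thesis by (metis div_mult_mod_eq)
  next
    case 2
    then show ?thesis using assms(2) by (simp add: cand_rank_def)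
  next
    case 3
    then show ?thesis
      using assms(1) window_block[of p] window_block[of q] by (auto simp: cand_block_def)
  qed
qed

lemma cand_exists:
  assumes "k < nb" "1 \<le> r" "r \<le> bs"
    and "k + 1 = nb \<or> (rank_lo \<le> int r \<and> int r \<le> rank_hi)"
  shows "\<exists>p<ncand. cand_block p = k \<and> cand_rank p = r"
proof (cases "k + 1 = nb")
  case True
  let ?p = "(nb - 1) * win_len + (r - 1)"
  have "?p < ncand" "cand_block ?p = k" "cand_rank ?p = r"
    using True assms(2,3) by (auto simp: ncand_def cand_block_def cand_rank_def)
  then show ?thesis by blast
next
  case False
  then have window: "win_lo \<le> int r" "int r \<le> win_hi"
    using assms unfolding win_lo_def win_hi_def by auto
  define t where "t = r - nat win_lo"
  have r: "r = nat win_lo + t"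
    using window(1) unfolding t_def by linarith
  have t: "t < win_len"
    using window unfolding t_def win_len_def by linarith
  have "k * win_len + t < (k + 1) * win_len"
    using t by simp
  also have "\<dots> \<le> (nb - 1) * win_len"
    using False assms(1) by (intro mult_le_mono1) simp
  finally have p: "k * win_len + t < (nb - 1) * win_len" .
  then have "cand_block (k * win_len + t) = k" "cand_rank (k * win_len + t) = r"
    using t r by (simp_all add: cand_block_def cand_rank_def)
  moreover have "k * win_len + t < ncand"
    using p by (simp add: ncand_def)
  ultimately show ?thesis by blast
qed

definition admissible :: "(nat \<Rightarrow> real) \<Rightarrow> bool" where
  "admissible x \<longleftrightarrow> in_S d \<delta> x \<and> (\<forall>i<d. x i \<noteq> 0)"

lemma admissible_range: "admissible x \<Longrightarrow> i < d \<Longrightarrow> \<delta> \<le> x i \<and> x i \<le> 1 - \<delta>"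
  unfolding admissible_def in_S_def by blast

lemma admissible_sep: "admissible x \<Longrightarrow> i < d \<Longrightarrow> j < d \<Longrightarrow> i \<noteq> j \<Longrightarrow> \<delta> \<le> \<bar>x i - x j\<bar>"
  unfolding admissible_def in_S_def by blast

lemma admissible_inj: "admissible x \<Longrightarrow> inj_on x {..<d}"
  unfolding admissible_def using in_S_nonzero_inj delta_pos by blast

lemma median_is_candidate:
  assumes x: "admissible x" "success_cond \<gamma> d x" and i: "i < d" "median d x = x i"
  shows "\<exists>p<ncand. cand_block p = i div bs \<and> cand_rank p = rank_in (block d (i div bs)) x (x i)"
proof -
  obtain k where k: "k < nb" "x i \<in> y_block \<gamma> d x k"
    using x(2) i(2) unfolding success_cond_def by auto
  then obtain j where j: "j \<in> block d k" "x j = x i"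
    and window: "k + 1 = nb \<or>
                 (rank_lo \<le> int (rank_in (block d k) x (x j)) \<and> int (rank_in (block d k) x (x j)) \<le> rank_hi)"
    unfolding y_block_def rank_lo_def rank_hi_def by (auto split: if_splits)
  have "j = i"
    using admissible_inj[OF x(1)] j i(1) by (auto simp: mem_block inj_on_def)
  then have ib: "i \<in> block d k" and k_eq: "k = i div bs"
    using j(1) by (auto simp: mem_block)
  have "1 \<le> rank_in (block d k) x (x i)" "rank_in (block d k) x (x i) \<le> bs"
    using rank_in_ge1[OF finite_block ib] order_trans[OF rank_in_le_card[OF finite_block] card_block_le]
    by auto
  then show ?thesis
    using cand_exists[OF k(1) _ _ window] \<open>j = i\<close> k_eq by simp
qed

definition block_entry :: "nat \<Rightarrow> nat \<Rightarrow> nat" where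
  "block_entry k u = k * bs + u"

lemma sum_block_entries:
  "(\<Sum>u<bs. if block_entry k u < d then f (block_entry k u) else 0) = (\<Sum>e\<in>block d k. f e)"
proof -
  have "block d k = block_entry k ` {u\<in>{..<bs}. block_entry k u < d}"
  proof (intro set_eqI iffI)
    fix j assume "j \<in> block d k"
    then have "j < d" "j = block_entry k (j mod bs)"
      by (auto simp: mem_block block_entry_def)
    then show "j \<in> block_entry k ` {u\<in>{..<bs}. block_entry k u < d}"
      using bs_pos by (metis (mono_tags, lifting) image_eqI lessThan_iff mem_Collect_eq mod_less_divisor)
  qed (auto simp: mem_block block_entry_def)
  moreover have "inj_on (block_entry k) A" for A
    by (simp add: inj_on_def block_entry_def)
  ultimately have "(\<Sum>e\<in>block d k. f e) = (\<Sum>u\<in>{u\<in>{..<bs}. block_entry k u < d}. f (block_entry k u))"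
    by (simp add: sum.reindex)
  also have "\<dots> = (\<Sum>u<bs. if block_entry k u < d then f (block_entry k u) else 0)"
    by (rule sum.inter_filter) simp
  finally show ?thesis ..
qed

definition M1 :: nat where "M1 = d * bs"
definition n1 :: nat where "n1 = 2 * M1 + d"

text \<open>Neuron \<open>s * M1 + (a * bs + u)\<close> (\<open>s < 2\<close>) computes
  \<open>relu ((x a - x (block_entry (a div bs) u)) / \<delta> - s)\<close>, or 0 if the block of \<open>a\<close> has no
  \<open>u\<close>-th entry; neuron \<open>2 * M1 + a\<close> computes \<open>relu (x a)\<close>.\<close>

definition W1 :: "nat \<Rightarrow> nat \<Rightarrow> real" where
  "W1 j i =
     (if j < 2 * M1 then
        (let a = j mod M1 div bs; b = block_entry (a div bs) (j mod M1 mod bs) in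
         if b < d then (of_bool (i = a) - of_bool (i = b)) / \<delta> else 0)
      else of_bool (i = j - 2 * M1))"

definition b1 :: "nat \<Rightarrow> real" where
  "b1 j = (if M1 \<le> j \<and> j < 2 * M1 then -1 else 0)"

definition act1 :: "(nat \<Rightarrow> real) \<Rightarrow> nat \<Rightarrow> real" where
  "act1 x = relu_layer n1 d W1 b1 x"

lemma act1_compare:
  assumes "a < d" "u < bs" "s < 2"
  shows "act1 x (s * M1 + (a * bs + u)) =
           (if block_entry (a div bs) u < d then relu ((x a - x (block_entry (a div bs) u)) / \<delta> - real s) else 0)"
proof -
  let ?j = "s * M1 + (a * bs + u)"
  have au: "a * bs + u < M1"
    unfolding M1_def using pair_index_less[OF assms(1,2)] .
  then have j: "?j < 2 * M1" "?j mod M1 = a * bs + u"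
    using assms(3) by (auto simp: less_Suc_eq numeral_2_eq_2)
  have "(\<Sum>i<d. W1 ?j i * x i) = (if block_entry (a div bs) u < d then (x a - x (block_entry (a div bs) u)) / \<delta> else 0)"
    using j assms(1,2)
    by (simp add: W1_def block_entry_def of_bool_def diff_divide_distrib left_diff_distrib
        sum_subtractf sum_divide_distrib[symmetric] sum_delta_mult)
  moreover have "b1 ?j = - real s"
    using au assms(3) by (auto simp: b1_def less_Suc_eq numeral_2_eq_2)
  ultimately show ?thesis
    using j(1) by (simp add: act1_def relu_layer_apply n1_def relu_def)
qed

lemma act1_pass:
  assumes "a < d"
  shows "act1 x (2 * M1 + a) = relu (x a)"
proof -
  have "(\<Sum>i<d. W1 (2 * M1 + a) i * x i) = x a"
    using assms by (simp add: W1_def of_bool_def sum_delta_mult)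
  then show ?thesis
    using assms by (simp add: act1_def relu_layer_apply n1_def b1_def)
qed

definition net_block_rank :: "(nat \<Rightarrow> real) \<Rightarrow> nat \<Rightarrow> real" where
  "net_block_rank x e =
     1 + (\<Sum>u<bs. if block_entry (e div bs) u < d then clamp01 ((x e - x (block_entry (e div bs) u)) / \<delta>) else 0)"

lemma act1_net_block_rank:
  assumes "e < d"
  shows "1 + (\<Sum>u<bs. act1 x (e * bs + u)) - (\<Sum>u<bs. act1 x (M1 + (e * bs + u))) =
           net_block_rank x e"
proof -
  have "(\<Sum>u<bs. act1 x (e * bs + u)) - (\<Sum>u<bs. act1 x (M1 + (e * bs + u))) =
        (\<Sum>u<bs. act1 x (e * bs + u) - act1 x (M1 + (e * bs + u)))"
    by (simp add: sum_subtractf)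
  also have "\<dots> = (\<Sum>u<bs. if block_entry (e div bs) u < d then clamp01 ((x e - x (block_entry (e div bs) u)) / \<delta>) else 0)"
  proof (intro sum.cong refl)
    fix u assume "u \<in> {..<bs}"
    then show "act1 x (e * bs + u) - act1 x (M1 + (e * bs + u)) =
               (if block_entry (e div bs) u < d then clamp01 ((x e - x (block_entry (e div bs) u)) / \<delta>) else 0)"
      using act1_compare[OF assms, of u 0 x] act1_compare[OF assms, of u 1 x]
      by (simp add: clamp01_def)
  qed
  finally show ?thesis
    by (simp add: net_block_rank_def)
qed

definition M2 :: nat where "M2 = ncand * (bs * 5)"
definition n2 :: nat where "n2 = M2 + d"

text \<open>Neuron \<open>(p * bs + u) * 5 + k\<close> is unit \<open>k\<close> of the gate
  \<open>relu_gate (relu (x e)) (net_block_rank x e - cand_rank p)\<close> for \<open>e = block_entry (cand_block p) u\<close>,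
  the block rank being read off the differences of paired layer-1 neurons;
  neuron \<open>M2 + a\<close> computes \<open>relu (x a)\<close>.\<close>

definition W2 :: "nat \<Rightarrow> nat \<Rightarrow> real" where
  "W2 j i =
     (if j < M2 then
        (let e = block_entry (cand_block (j div 5 div bs)) (j div 5 mod bs); k = j mod 5 in
         if e < d then
           (if i < M1 then (if i div bs = e then gate_in_t k else 0)
            else if i < 2 * M1 then (if (i - M1) div bs = e then - gate_in_t k else 0)
            else if i = 2 * M1 + e then gate_in_c k else 0)
         else 0)
      else of_bool (i = 2 * M1 + (j - M2)))"

definition b2 :: "nat \<Rightarrow> real" where
  "b2 j =
     (if j < M2 \<and> block_entry (cand_block (j div 5 div bs)) (j div 5 mod bs) < d
      then gate_in_t (j mod 5) * (1 - real (cand_rank (j div 5 div bs))) else 0)"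

definition act2 :: "(nat \<Rightarrow> real) \<Rightarrow> nat \<Rightarrow> real" where
  "act2 x = relu_layer n2 n1 W2 b2 (act1 x)"

lemma W2_sum:
  assumes "j < M2" and e: "block_entry (cand_block (j div 5 div bs)) (j div 5 mod bs) = e" "e < d"
  shows "(\<Sum>i<n1. W2 j i * y i) =
           gate_in_t (j mod 5) * ((\<Sum>u<bs. y (e * bs + u)) - (\<Sum>u<bs. y (M1 + (e * bs + u))))
           + gate_in_c (j mod 5) * y (2 * M1 + e)"
proof -
  have "(\<Sum>i<n1. W2 j i * y i) = (\<Sum>i<M1. W2 j i * y i) + (\<Sum>i<M1. W2 j (M1 + i) * y (M1 + i))
        + (\<Sum>i<d. W2 j (2 * M1 + i) * y (2 * M1 + i))"
    unfolding n1_def mult_2 by (simp add: sum_lessThan_add)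
  also have "(\<Sum>i<M1. W2 j i * y i) = (\<Sum>i<d * bs. (if i div bs = e then gate_in_t (j mod 5) else 0) * y i)"
    unfolding M1_def by (intro sum.cong) (use assms in \<open>auto simp: W2_def M1_def\<close>)
  also have "\<dots> = (\<Sum>u<bs. gate_in_t (j mod 5) * y (e * bs + u))"
    by (rule sum_select_group[OF e(2)])
  also have "(\<Sum>i<M1. W2 j (M1 + i) * y (M1 + i)) =
             (\<Sum>i<d * bs. (if i div bs = e then - gate_in_t (j mod 5) else 0) * y (M1 + i))"
    unfolding M1_def by (intro sum.cong) (use assms in \<open>auto simp: W2_def M1_def\<close>)
  also have "\<dots> = (\<Sum>u<bs. - gate_in_t (j mod 5) * y (M1 + (e * bs + u)))"
    by (rule sum_select_group[OF e(2)])
  also have "(\<Sum>i<d. W2 j (2 * M1 + i) * y (2 * M1 + i)) =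
             (\<Sum>i<d. (if i = e then gate_in_c (j mod 5) else 0) * y (2 * M1 + i))"
    by (intro sum.cong) (use assms in \<open>auto simp: W2_def\<close>)
  also have "\<dots> = gate_in_c (j mod 5) * y (2 * M1 + e)"
    using e(2) by (simp add: sum_delta_mult)
  finally show ?thesis
    by (simp add: sum_distrib_left sum_negf algebra_simps)
qed

lemma act2_gate:
  assumes p: "p < ncand" and u: "u < bs" and k: "k < 5"
  shows "act2 x ((p * bs + u) * 5 + k) =
           (if block_entry (cand_block p) u < d
            then relu (gate_in_c k * relu (x (block_entry (cand_block p) u))
                       + gate_in_t k * (net_block_rank x (block_entry (cand_block p) u) - real (cand_rank p)))
            else 0)"
proof -
  let ?j = "(p * bs + u) * 5 + k" and ?e = "block_entry (cand_block p) u"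
  have j: "?j div 5 div bs = p" "?j div 5 mod bs = u" "?j mod 5 = k"
    using pair_index_div_mod[OF k, of "p * bs + u"] pair_index_div_mod[OF u, of p] by simp_all
  have "?j < M2"
    unfolding M2_def using pair_index_less[OF pair_index_less[OF p u] k] by (simp add: ac_simps)
  then have jn: "?j < n2"
    by (simp add: n2_def)
  show ?thesis
  proof (cases "?e < d")
    case True
    have "(\<Sum>i<n1. W2 ?j i * act1 x i) + b2 ?j =
          gate_in_t k * (1 + (\<Sum>u<bs. act1 x (?e * bs + u)) - (\<Sum>u<bs. act1 x (M1 + (?e * bs + u))))
          + gate_in_c k * relu (x ?e) - gate_in_t k * real (cand_rank p)"
      using W2_sum[OF \<open>?j < M2\<close> _ True, of "act1 x"] act1_pass[OF True] True j \<open>?j < M2\<close>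
      by (simp add: b2_def algebra_simps)
    also have "\<dots> = gate_in_c k * relu (x ?e) + gate_in_t k * (net_block_rank x ?e - real (cand_rank p))"
      by (simp only: act1_net_block_rank[OF True]) (simp add: algebra_simps)
    finally show ?thesis
      using True jn by (simp add: act2_def relu_layer_apply)
  next
    case False
    then show ?thesis
      using jn j \<open>?j < M2\<close> by (simp add: act2_def relu_layer_apply W2_def b2_def Let_def relu_def)
  qed
qed

lemma act2_pass:
  assumes "a < d"
  shows "act2 x (M2 + a) = relu (x a)"
proof -
  have "(\<Sum>i<n1. W2 (M2 + a) i * act1 x i) = act1 x (2 * M1 + a)"
    using assms by (simp add: W2_def n1_def of_bool_def sum_delta_mult)
  then show ?thesis
    using assms by (simp add: act2_def relu_layer_apply n2_def b2_def act1_pass relu_def)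
qed

definition cand_value :: "(nat \<Rightarrow> real) \<Rightarrow> nat \<Rightarrow> real" where
  "cand_value x p =
     (\<Sum>u<bs. if block_entry (cand_block p) u < d
             then relu_gate (relu (x (block_entry (cand_block p) u)))
                    (net_block_rank x (block_entry (cand_block p) u) - real (cand_rank p))
             else 0)"

lemma act2_cand_value:
  assumes p: "p < ncand"
  shows "(\<Sum>i<M2. (if i div (bs * 5) = p then gate_out (i mod 5) else 0) * act2 x i) = cand_value x p"
proof -
  have "(\<Sum>i<M2. (if i div (bs * 5) = p then gate_out (i mod 5) else 0) * act2 x i) =
        (\<Sum>i<ncand * (bs * 5). (if i div (bs * 5) = p then gate_out (i mod (bs * 5) mod 5) else 0) * act2 x i)"
  proof -
    have "i mod (bs * 5) mod 5 = i mod 5" for i :: nat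
      by (simp add: mod_mod_cancel)
    then show ?thesis
      unfolding M2_def by presburger
  qed
  also have "\<dots> = (\<Sum>v<bs * 5. gate_out (v mod 5) * act2 x (p * (bs * 5) + v))"
    by (rule sum_select_group[OF p])
  also have "\<dots> = (\<Sum>u<bs. \<Sum>k<5. gate_out k * act2 x ((p * bs + u) * 5 + k))"
    by (simp add: sum_lessThan_mult_regroup algebra_simps)
  also have "\<dots> = cand_value x p"
    unfolding cand_value_def
  proof (intro sum.cong refl)
    fix u assume "u \<in> {..<bs}"
    then have u: "u < bs" by simp
    let ?e = "block_entry (cand_block p) u"
    have "(\<Sum>k<5. gate_out k * act2 x ((p * bs + u) * 5 + k)) =
          (\<Sum>k<5. gate_out k * (if ?e < d then relu (gate_in_c k * relu (x ?e)
                 + gate_in_t k * (net_block_rank x ?e - real (cand_rank p))) else 0))"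
    proof (intro sum.cong refl)
      fix k assume "k \<in> {..<(5::nat)}"
      then show "gate_out k * act2 x ((p * bs + u) * 5 + k) =
                 gate_out k * (if ?e < d then relu (gate_in_c k * relu (x ?e)
                   + gate_in_t k * (net_block_rank x ?e - real (cand_rank p))) else 0)"
        using act2_gate[OF p u, of k x] by simp
    qed
    then show "(\<Sum>k<5. gate_out k * act2 x ((p * bs + u) * 5 + k)) =
               (if ?e < d then relu_gate (relu (x ?e)) (net_block_rank x ?e - real (cand_rank p)) else 0)"
      by (simp add: relu_gate_units)
  qed
  finally show ?thesis .
qed

definition M3 :: nat where "M3 = ncand * (d * 2)"
definition n3 :: nat where "n3 = M3 + 2 * ncand"

text \<open>Neuron \<open>(p * d + a) * 2 + s\<close> (\<open>s < 2\<close>) computes \<open>relu ((relu (x a) - cand_value x p) / \<delta> - s)\<close>,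
  neuron \<open>M3 + (2 * p + s)\<close> computes \<open>relu (cand_value x p - s)\<close>; the candidate value is
  assembled from the gate units of layer 2.\<close>

definition W3 :: "nat \<Rightarrow> nat \<Rightarrow> real" where
  "W3 j i =
     (if j < M3 then
        (if i < M2 then (if i div (bs * 5) = j div 2 div d then - gate_out (i mod 5) / \<delta> else 0)
         else if i = M2 + j div 2 mod d then 1 / \<delta> else 0)
      else (if i < M2 \<and> i div (bs * 5) = (j - M3) div 2 then gate_out (i mod 5) else 0))"

definition b3 :: "nat \<Rightarrow> real" where
  "b3 j = (if odd j then -1 else 0)"

definition act3 :: "(nat \<Rightarrow> real) \<Rightarrow> nat \<Rightarrow> real" where
  "act3 x = relu_layer n3 n2 W3 b3 (act2 x)"

lemma act3_compare:
  assumes p: "p < ncand" and a: "a < d" and s: "s < 2"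
  shows "act3 x ((p * d + a) * 2 + s) = relu ((relu (x a) - cand_value x p) / \<delta> - real s)"
proof -
  let ?j = "(p * d + a) * 2 + s"
  have j: "?j div 2 div d = p" "?j div 2 mod d = a" "?j mod 2 = s"
    using pair_index_div_mod[OF s, of "p * d + a"] pair_index_div_mod[OF a, of p] by simp_all
  have "?j < M3"
    unfolding M3_def using pair_index_less[OF pair_index_less[OF p a] s] by (simp add: ac_simps)
  have "(\<Sum>i<n2. W3 ?j i * act2 x i) =
        (\<Sum>i<M2. W3 ?j i * act2 x i) + (\<Sum>i<d. W3 ?j (M2 + i) * act2 x (M2 + i))"
    unfolding n2_def by (rule sum_lessThan_add)
  also have "(\<Sum>i<M2. W3 ?j i * act2 x i) =
             - (\<Sum>i<M2. (if i div (bs * 5) = p then gate_out (i mod 5) else 0) * act2 x i) / \<delta>"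
    unfolding sum_divide_distrib sum_negf[symmetric]
    by (intro sum.cong refl) (use j \<open>?j < M3\<close> in \<open>auto simp: W3_def\<close>)
  also have "\<dots> = - cand_value x p / \<delta>"
    by (simp add: act2_cand_value[OF p])
  also have "(\<Sum>i<d. W3 ?j (M2 + i) * act2 x (M2 + i)) = (\<Sum>i<d. (if i = a then 1 / \<delta> else 0) * act2 x (M2 + i))"
    by (intro sum.cong refl) (use j \<open>?j < M3\<close> in \<open>auto simp: W3_def\<close>)
  also have "\<dots> = relu (x a) / \<delta>"
    using a by (simp add: sum_delta_mult act2_pass)
  finally have "(\<Sum>i<n2. W3 ?j i * act2 x i) + b3 ?j = (relu (x a) - cand_value x p) / \<delta> - real s"
    using s j(3) by (auto simp: b3_def diff_divide_distrib odd_iff_mod_2_eq_one less_2_cases_iff)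
  moreover have "?j < n3"
    using \<open>?j < M3\<close> by (simp add: n3_def)
  ultimately show ?thesis
    by (simp add: act3_def relu_layer_apply)
qed

lemma act3_pass:
  assumes p: "p < ncand" and s: "s < 2"
  shows "act3 x (M3 + (2 * p + s)) = relu (cand_value x p - real s)"
proof -
  let ?j = "M3 + (2 * p + s)"
  have "(\<Sum>i<n2. W3 ?j i * act2 x i) =
        (\<Sum>i<M2. W3 ?j i * act2 x i) + (\<Sum>i<d. W3 ?j (M2 + i) * act2 x (M2 + i))"
    unfolding n2_def by (rule sum_lessThan_add)
  also have "\<dots> = (\<Sum>i<M2. (if i div (bs * 5) = p then gate_out (i mod 5) else 0) * act2 x i)"
    using s by (simp add: W3_def)
  also have "\<dots> = cand_value x p"
    by (rule act2_cand_value[OF p])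
  finally have "(\<Sum>i<n2. W3 ?j i * act2 x i) + b3 ?j = cand_value x p - real s"
    using s by (auto simp: b3_def M3_def less_2_cases_iff)
  moreover have "?j < n3"
    using p s by (simp add: n3_def)
  ultimately show ?thesis
    by (simp add: act3_def relu_layer_apply)
qed

definition med_rank :: nat where "med_rank = nat \<lceil>real d / 2\<rceil>"

definition net_global_rank :: "(nat \<Rightarrow> real) \<Rightarrow> real \<Rightarrow> real" where
  "net_global_rank x c = real d - (\<Sum>a<d. clamp01 ((relu (x a) - c) / \<delta>))"

definition n4 :: nat where "n4 = ncand * 5"

text \<open>Neuron \<open>p * 5 + k\<close> is unit \<open>k\<close> of the gate
  \<open>relu_gate (clamp01 (cand_value x p)) (net_global_rank x (cand_value x p) - med_rank)\<close>.\<close>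

definition W4 :: "nat \<Rightarrow> nat \<Rightarrow> real" where
  "W4 j i =
     (if i < M3 then
        (if i div (d * 2) = j div 5 then (if even i then - gate_in_t (j mod 5) else gate_in_t (j mod 5))
         else 0)
      else if i = M3 + 2 * (j div 5) then gate_in_c (j mod 5)
      else if i = M3 + 2 * (j div 5) + 1 then - gate_in_c (j mod 5)
      else 0)"

definition b4 :: "nat \<Rightarrow> real" where
  "b4 j = gate_in_t (j mod 5) * (real d - real med_rank)"

definition w_out :: "nat \<Rightarrow> real" where
  "w_out i = gate_out (i mod 5)"

definition act4 :: "(nat \<Rightarrow> real) \<Rightarrow> nat \<Rightarrow> real" where
  "act4 x = relu_layer n4 n3 W4 b4 (act3 x)"

definition median_network :: relu_net where
  "median_network = ([(n1, W1, b1), (n2, W2, b2), (n3, W3, b3), (n4, W4, b4)], w_out, 0)"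

lemma W4_compare_sum:
  assumes p: "p < ncand" and "j div 5 = p"
  shows "(\<Sum>i<M3. W4 j i * act3 x i) = gate_in_t (j mod 5) * (net_global_rank x (cand_value x p) - real d)"
proof -
  let ?g = "gate_in_t (j mod 5)"
  have parity: "even (i mod (d * 2)) \<longleftrightarrow> even i" for i :: nat
    using mod_mod_cancel[of 2 "d * 2" i] by (simp add: even_iff_mod_2_eq_zero)
  have "(\<Sum>i<M3. W4 j i * act3 x i) =
        (\<Sum>i<ncand * (d * 2). (if i div (d * 2) = p then (if even (i mod (d * 2)) then - ?g else ?g) else 0) * act3 x i)"
    unfolding M3_def by (intro sum.cong refl) (use assms in \<open>auto simp: W4_def M3_def parity\<close>)
  also have "\<dots> = (\<Sum>v<d * 2. (if even v then - ?g else ?g) * act3 x (p * (d * 2) + v))"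
    by (rule sum_select_group[OF p])
  also have "\<dots> = (\<Sum>a<d. \<Sum>s<2. (if even (a * 2 + s) then - ?g else ?g) * act3 x ((p * d + a) * 2 + s))"
    by (simp add: sum_lessThan_mult_regroup algebra_simps)
  also have "\<dots> = (\<Sum>a<d. - ?g * clamp01 ((relu (x a) - cand_value x p) / \<delta>))"
  proof (intro sum.cong refl)
    fix a assume "a \<in> {..<d}"
    then have a: "a < d" by simp
    have "(\<Sum>s<2. (if even (a * 2 + s) then - ?g else ?g) * act3 x ((p * d + a) * 2 + s)) =
          - ?g * act3 x ((p * d + a) * 2 + 0) + ?g * act3 x ((p * d + a) * 2 + 1)"
      unfolding sum_lessThan_2 by simp
    also have "\<dots> = - ?g * clamp01 ((relu (x a) - cand_value x p) / \<delta>)"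
      using act3_compare[OF p a, of 0 x] act3_compare[OF p a, of 1 x]
      by (simp add: clamp01_def algebra_simps)
    finally show "(\<Sum>s<2. (if even (a * 2 + s) then - ?g else ?g) * act3 x ((p * d + a) * 2 + s)) =
                  - ?g * clamp01 ((relu (x a) - cand_value x p) / \<delta>)" .
  qed
  also have "\<dots> = ?g * (net_global_rank x (cand_value x p) - real d)"
    by (simp add: net_global_rank_def sum_distrib_left sum_negf)
  finally show ?thesis .
qed

lemma act4_gate:
  assumes p: "p < ncand" and k: "k < 5"
  shows "act4 x (p * 5 + k) =
           relu (gate_in_c k * clamp01 (cand_value x p)
                 + gate_in_t k * (net_global_rank x (cand_value x p) - real med_rank))"
proof -
  let ?j = "p * 5 + k"
  have j: "?j div 5 = p" "?j mod 5 = k"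
    using pair_index_div_mod[OF k] by simp_all
  have "(\<Sum>i<n3. W4 ?j i * act3 x i) =
        (\<Sum>i<M3. W4 ?j i * act3 x i) + (\<Sum>i<2 * ncand. W4 ?j (M3 + i) * act3 x (M3 + i))"
    unfolding n3_def by (rule sum_lessThan_add)
  also have "(\<Sum>i<2 * ncand. W4 ?j (M3 + i) * act3 x (M3 + i)) =
             (\<Sum>i<2 * ncand. ((if i = 2 * p then gate_in_c k else 0) + (if i = 2 * p + 1 then - gate_in_c k else 0))
                              * act3 x (M3 + i))"
    by (intro sum.cong refl) (use j in \<open>auto simp: W4_def\<close>)
  also have "\<dots> = gate_in_c k * (act3 x (M3 + (2 * p + 0)) - act3 x (M3 + (2 * p + 1)))"
    using p by (simp add: distrib_right sum.distrib sum_delta_mult right_diff_distrib)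
  also have "\<dots> = gate_in_c k * clamp01 (cand_value x p)"
    using act3_pass[OF p, of 0 x] act3_pass[OF p, of 1 x] by (simp add: clamp01_def)
  finally have "(\<Sum>i<n3. W4 ?j i * act3 x i) + b4 ?j =
                gate_in_c k * clamp01 (cand_value x p)
                + gate_in_t k * (net_global_rank x (cand_value x p) - real med_rank)"
    using W4_compare_sum[OF p j(1)] j(2) by (simp add: b4_def algebra_simps)
  moreover have "?j < n4"
    using pair_index_less[OF p k] by (simp add: n4_def)
  ultimately show ?thesis
    by (simp add: act4_def relu_layer_apply)
qed

lemma net_eval_median_network:
  "net_eval d median_network x =
     (\<Sum>p<ncand. relu_gate (clamp01 (cand_value x p)) (net_global_rank x (cand_value x p) - real med_rank))"
proof -
  have "net_eval d median_network x = (\<Sum>i<ncand * 5. w_out i * act4 x i)"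
    by (simp add: net_eval_def median_network_def act1_def act2_def act3_def act4_def relu_layer_def n4_def)
  also have "\<dots> = (\<Sum>p<ncand. \<Sum>k<5. gate_out k * act4 x (p * 5 + k))"
    by (simp add: sum_lessThan_mult_regroup w_out_def)
  also have "\<dots> = (\<Sum>p<ncand. relu_gate (clamp01 (cand_value x p)) (net_global_rank x (cand_value x p) - real med_rank))"
    by (intro sum.cong refl) (simp add: act4_gate relu_gate_units[symmetric])
  finally show ?thesis .
qed

section \<open>Correctness on admissible inputs\<close>

lemma net_block_rank_admissible:
  assumes x: "admissible x" and e: "e < d"
  shows "net_block_rank x e = real (rank_in (block d (e div bs)) x (x e))"
proof -
  let ?B = "block d (e div bs)"
  have eB: "e \<in> ?B"
    using e by (simp add: mem_block)
  have step: "clamp01 ((x e - x j) / \<delta>) = of_bool (x j < x e)" if "j \<in> ?B" for j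
  proof -
    have "j < d" using that by (simp add: mem_block)
    then have "x e - x j = 0 \<or> \<delta> \<le> \<bar>x e - x j\<bar>"
      using admissible_sep[OF x e] by (cases "j = e") auto
    then show ?thesis
      using clamp01_separated_step[OF delta_pos] by simp
  qed
  have "net_block_rank x e = 1 + (\<Sum>j\<in>?B. clamp01 ((x e - x j) / \<delta>))"
    unfolding net_block_rank_def sum_block_entries[where f="\<lambda>j. clamp01 ((x e - x j) / \<delta>)"] ..
  also have "\<dots> = 1 + real (card {j\<in>?B. x j < x e})"
    by (simp add: step finite_block Int_def conj_commute)
  also have "\<dots> = real (rank_in ?B x (x e))"
    using rank_in_eq_Suc_card_less[OF finite_block _ eB] inj_on_subset[OF admissible_inj[OF x]]
    by (simp add: mem_block subset_eq)
  finally show ?thesis .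
qed

lemma cand_value_admissible:
  assumes x: "admissible x"
  shows "cand_value x p =
           (\<Sum>e\<in>block d (cand_block p). if rank_in (block d (cand_block p)) x (x e) = cand_rank p then x e else 0)"
proof -
  have "relu_gate (relu (x e)) (net_block_rank x e - real (cand_rank p)) =
        (if rank_in (block d (cand_block p)) x (x e) = cand_rank p then x e else 0)"
    if "e \<in> block d (cand_block p)" for e
  proof -
    have e: "e < d" "e div bs = cand_block p"
      using that by (simp_all add: mem_block)
    then have xe: "relu (x e) = x e" "0 \<le> x e" "x e \<le> 1"
      using admissible_range[OF x e(1)] delta_pos by (simp_all add: relu_def)
    have t: "net_block_rank x e - real (cand_rank p) =
          of_int (int (rank_in (block d (cand_block p)) x (x e)) - int (cand_rank p))"
      using net_block_rank_admissible[OF x e(1)] e(2) by simp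
    show ?thesis
      unfolding t xe(1) relu_gate_of_int[OF xe(2,3)] by simp
  qed
  then show ?thesis
    unfolding cand_value_def
      sum_block_entries[where f="\<lambda>e. relu_gate (relu (x e)) (net_block_rank x e - real (cand_rank p))"]
    by (intro sum.cong) simp_all
qed

lemma cand_value_hit:
  assumes x: "admissible x" and e: "e \<in> block d (cand_block p)"
    and r: "rank_in (block d (cand_block p)) x (x e) = cand_rank p"
  shows "cand_value x p = x e"
proof -
  have "rank_in (block d (cand_block p)) x (x e') = cand_rank p \<longleftrightarrow> e' = e"
    if "e' \<in> block d (cand_block p)" for e'
    using rank_in_inj[OF finite_block that e] admissible_inj[OF x] that e r
    by (auto simp: mem_block inj_on_def)
  then show ?thesis
    unfolding cand_value_admissible[OF x] using e by (simp add: sum.delta finite_block cong: sum.cong)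
qed

lemma cand_value_cases:
  assumes x: "admissible x"
  shows "cand_value x p = 0 \<or>
         (\<exists>e\<in>block d (cand_block p). rank_in (block d (cand_block p)) x (x e) = cand_rank p \<and> cand_value x p = x e)"
  using cand_value_hit[OF x] cand_value_admissible[OF x] by (auto intro: sum.neutral)

lemma net_global_rank_admissible:
  assumes x: "admissible x" and c: "c = 0 \<or> (\<exists>e<d. c = x e)"
  shows "net_global_rank x c = real (rank_in {..<d} x c)"
proof -
  have step: "clamp01 ((relu (x a) - c) / \<delta>) = of_bool (c < x a)" if a: "a < d" for a
  proof -
    have "relu (x a) = x a" "\<delta> \<le> x a"
      using admissible_range[OF x a] delta_pos by (simp_all add: relu_def)
    moreover have "x a - c = 0 \<or> \<delta> \<le> \<bar>x a - c\<bar>"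
      using c admissible_sep[OF x a] \<open>\<delta> \<le> x a\<close> by (cases "c = 0") force+
    ultimately show ?thesis
      using clamp01_separated_step[OF delta_pos] by simp
  qed
  have "card ({a\<in>{..<d}. c < x a} \<union> {a\<in>{..<d}. x a \<le> c}) =
        card {a\<in>{..<d}. c < x a} + card {a\<in>{..<d}. x a \<le> c}"
    by (rule card_Un_disjoint) auto
  moreover have "{a\<in>{..<d}. c < x a} \<union> {a\<in>{..<d}. x a \<le> c} = {..<d}"
    by auto
  ultimately have "card {a\<in>{..<d}. c < x a} + card {a\<in>{..<d}. x a \<le> c} = d"
    by simp
  then show ?thesis
    by (simp add: net_global_rank_def step Int_def rank_in_def flip: of_nat_add)
qed

lemma cand_gate_admissible:
  assumes x: "admissible x"
  shows "relu_gate (clamp01 (cand_value x p)) (net_global_rank x (cand_value x p) - real med_rank) =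
           (if rank_in {..<d} x (cand_value x p) = med_rank then cand_value x p else 0)"
proof -
  let ?c = "cand_value x p"
  have c: "?c = 0 \<or> (\<exists>e<d. ?c = x e)"
    using cand_value_cases[OF x, of p] by (auto simp: mem_block)
  then have "0 \<le> ?c \<and> ?c \<le> 1"
    using admissible_range[OF x] delta_pos by force
  then have "clamp01 ?c = ?c" "0 \<le> ?c" "?c \<le> 1"
    by (simp_all add: clamp01_eq_self)
  moreover have "net_global_rank x ?c - real med_rank = of_int (int (rank_in {..<d} x ?c) - int med_rank)"
    using net_global_rank_admissible[OF x c] by simp
  ultimately show ?thesis
    by (simp only: relu_gate_of_int) simp
qed

lemma net_eval_median_network_eq_median:
  assumes x: "admissible x" and success: "success_cond \<gamma> d x"
  shows "net_eval d median_network x = median d x"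
proof -
  obtain i where i: "i < d" "rank_in {..<d} x (x i) = med_rank"
    using median_index_exists[OF d_pos admissible_inj[OF x]] by (auto simp: med_rank_def)
  have med: "median d x = x i"
    using median_eqI[OF i(1)] i(2) by (simp add: med_rank_def)
  obtain q where q: "q < ncand" "cand_block q = i div bs"
    "cand_rank q = rank_in (block d (i div bs)) x (x i)"
    using median_is_candidate[OF x success i(1) med] by blast
  have cq: "cand_value x q = x i"
    using cand_value_hit[OF x] q i(1) by (simp add: mem_block)
  have selected: "rank_in {..<d} x (cand_value x p) = med_rank \<longleftrightarrow> p = q" for p
  proof
    assume r: "rank_in {..<d} x (cand_value x p) = med_rank"
    have "rank_in {..<d} x 0 = 0"
      using admissible_range[OF x] delta_pos unfolding rank_in_def by force
    then obtain e where e: "e \<in> block d (cand_block p)"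
      "rank_in (block d (cand_block p)) x (x e) = cand_rank p" "cand_value x p = x e"
      using cand_value_cases[OF x, of p] r med_rank_def d_pos by auto
    then have "x e = x i"
      using rank_in_inj[of "{..<d}" e i x] r i by (simp add: mem_block)
    then have "e = i"
      using admissible_inj[OF x] e(1) i(1) by (auto simp: mem_block inj_on_def)
    then show "p = q"
      using cand_inj e q by (simp add: mem_block)
  qed (use cq i in simp)
  have "net_eval d median_network x = (\<Sum>p<ncand. if p = q then x i else 0)"
    unfolding net_eval_median_network
    by (intro sum.cong refl) (simp add: cand_gate_admissible[OF x] selected cq)
  also have "\<dots> = median d x"
    using q(1) med by simp
  finally show ?thesis .
qed

lemma ncand_le_square: "real ncand \<le> real d ^ 2"
proof -
  have "ncand < 2 * d"
    using ncand_le num_blocks_mult_less[OF d_pos] block_size_le[of d] by simp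
  then have "real ncand \<le> 2 * real d - 1"
    by linarith
  also have "\<dots> \<le> real d ^ 2"
    using sum_power2_ge_zero[of "real d - 1" 0] by (simp add: power2_eq_square algebra_simps)
  finally show ?thesis .
qed

lemma net_eval_median_network_bounds:
  "net_eval d median_network x \<in> {- (real d ^ 2) .. real d ^ 2}"
proof -
  have gate: "0 \<le> relu_gate (clamp01 c) t" "relu_gate (clamp01 c) t \<le> 1" for c t
    using relu_gate_bounds[OF clamp01_bounds(1)] clamp01_bounds(2) order_trans by blast+
  have "0 \<le> net_eval d median_network x"
    unfolding net_eval_median_network by (intro sum_nonneg) (simp add: gate)
  moreover have "net_eval d median_network x \<le> real ncand"
    unfolding net_eval_median_network using sum_bounded_above[of "{..<ncand}", OF gate(2)] by simp
  ultimately have "0 \<le> net_eval d median_network x" "net_eval d median_network x \<le> real d ^ 2"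
    using ncand_le_square by linarith+
  moreover have "- (real d ^ 2) \<le> 0"
    by simp
  ultimately show ?thesis
    by simp
qed

section \<open>Size of the network\<close>

lemma biases_abs_le: "\<bar>b2 j\<bar> \<le> real d" "\<bar>b4 j\<bar> \<le> real d"
proof -
  show "\<bar>b2 j\<bar> \<le> real d"
  proof (cases "j < M2")
    case True
    then have "j div (5 * bs) < ncand"
      unfolding M2_def by (intro less_mult_imp_div_less) (simp add: ac_simps)
    then have "j div 5 div bs < ncand"
      by (simp add: div_mult2_eq)
    then have "\<bar>1 - real (cand_rank (j div 5 div bs))\<bar> \<le> real d"
      using cand_rank_bounds block_size_le[of d] by fastforce
    then have "\<bar>gate_in_t (j mod 5)\<bar> * \<bar>1 - real (cand_rank (j div 5 div bs))\<bar> \<le> 1 * real d"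
      using gate_coeff_bounds(2) by (intro mult_mono) auto
    then show ?thesis
      by (simp add: b2_def abs_mult)
  qed (simp add: b2_def)
  have "med_rank \<le> d"
    unfolding med_rank_def by linarith
  then have "\<bar>gate_in_t (j mod 5)\<bar> * \<bar>real d - real med_rank\<bar> \<le> 1 * real d"
    using gate_coeff_bounds(2) by (intro mult_mono) auto
  then show "\<bar>b4 j\<bar> \<le> real d"
    by (simp add: b4_def abs_mult)
qed

lemma weights_bounded_median_network:
  assumes small: "\<delta> * real d \<le> 1"
  shows "weights_bounded d median_network (1 / \<delta>)"
proof -
  have d_le: "real d \<le> 1 / \<delta>"
    using small delta_pos by (simp add: field_simps)
  then have one_le: "1 \<le> 1 / \<delta>"
    using d_pos by linarith
  have coeff: "\<bar>gate_in_c k\<bar> \<le> 1 / \<delta>" "\<bar>gate_in_t k\<bar> \<le> 1 / \<delta>" "\<bar>gate_out k\<bar> \<le> 1 / \<delta>" for k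
    using gate_coeff_bounds one_le by (metis order_trans order_refl)+
  have compare: "\<bar>(of_bool P - of_bool Q) / \<delta>\<bar> \<le> 1 / \<delta>" for P Q
    using delta_pos by (cases P; cases Q) simp_all
  have of_bool: "\<bar>of_bool P\<bar> \<le> 1 / \<delta>" for P
    using one_le delta_pos by (cases P) simp_all
  have W1: "\<bar>W1 j i\<bar> \<le> 1 / \<delta>" for j i
    using compare of_bool delta_pos by (simp add: W1_def Let_def)
  have W2: "\<bar>W2 j i\<bar> \<le> 1 / \<delta>" for j i
    using coeff of_bool delta_pos by (simp add: W2_def Let_def)
  have W3: "\<bar>W3 j i\<bar> \<le> 1 / \<delta>" for j i
  proof -
    have "\<bar>gate_out (i mod 5) / \<delta>\<bar> = 1 / \<delta>" "\<bar>gate_out (i mod 5)\<bar> \<le> 1 / \<delta>"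
      using gate_coeff_bounds(3) coeff(3) delta_pos by (simp_all add: abs_divide)
    then show ?thesis
      using delta_pos by (auto simp: W3_def)
  qed
  have W4: "\<bar>W4 j i\<bar> \<le> 1 / \<delta>" for j i
    using coeff delta_pos by (simp add: W4_def)
  have b2: "\<bar>b2 j\<bar> \<le> 1 / \<delta>" and b4: "\<bar>b4 j\<bar> \<le> 1 / \<delta>" for j
    using biases_abs_le d_le by (meson order_trans)+
  show ?thesis
    using W1 W2 W3 W4 b2 b4 coeff one_le delta_pos
    by (simp add: weights_bounded_def median_network_def b1_def b3_def w_out_def)
qed

abbreviation dpow :: "real \<Rightarrow> real" where
  "dpow a \<equiv> real d powr a"

lemma dpow_ge_1: "0 \<le> a \<Longrightarrow> 1 \<le> dpow a"
  using d_pos by (simp add: ge_one_powr_ge_zero)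

lemma dpow_mono: "a \<le> b \<Longrightarrow> dpow a \<le> dpow b"
  using d_pos by (intro powr_mono) auto

lemma dpow_mult: "dpow a * dpow b = dpow (a + b)"
  by (simp add: powr_add)

lemma bs_le_dpow: "real bs \<le> 2 * dpow (2/3)"
  using block_size_bounds(2)[of d] dpow_ge_1[of "2/3"] by simp

lemma nb_le_dpow: "real nb \<le> 2 * dpow (1/3)"
proof -
  have "real d / real bs \<le> real d / dpow (2/3)"
    using block_size_bounds(1)[of d] dpow_ge_1[of "2/3"] bs_pos d_pos
    by (intro divide_left_mono mult_pos_pos) auto
  also have "\<dots> = dpow (1/3)"
    using dpow_mult[of "1/3" "2/3"] d_pos by (simp add: field_simps)
  finally show ?thesis
    using num_blocks_bounds(2)[of d] dpow_ge_1[of "1/3"] by simp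
qed

lemma win_len_le_dpow: "real win_len \<le> 5 * dpow (1/3 + \<gamma>)"
proof -
  let ?A = "dpow (2/3) / 2" and ?B = "dpow (1/3 + \<gamma>)"
  have "real_of_int win_hi \<le> ?A + ?B + 1"
    unfolding win_hi_def rank_hi_def using of_int_ceiling_le_add_one[of "?A + ?B"] by linarith
  moreover have "?A - ?B - 1 \<le> real_of_int win_lo"
    unfolding win_lo_def rank_lo_def using floor_correct[of "?A - ?B"] by linarith
  ultimately have "real win_len \<le> 2 * ?B + 3"
    unfolding win_len_def using dpow_ge_1[of "1/3 + \<gamma>"] gamma_pos by linarith
  then show ?thesis
    using dpow_ge_1[of "1/3 + \<gamma>"] gamma_pos by simp
qed

lemma ncand_le_dpow: "real ncand \<le> 12 * dpow (2/3 + \<gamma>)"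
proof -
  have "real ncand \<le> real nb * real win_len + real bs"
    unfolding ncand_def by (simp add: mult_right_mono)
  also have "\<dots> \<le> (2 * dpow (1/3)) * (5 * dpow (1/3 + \<gamma>)) + 2 * dpow (2/3)"
    using nb_le_dpow win_len_le_dpow bs_le_dpow by (intro add_mono mult_mono) auto
  also have "\<dots> = 10 * dpow (2/3 + \<gamma>) + 2 * dpow (2/3)"
    using dpow_mult[of "1/3" "1/3 + \<gamma>"] by (simp add: algebra_simps)
  also have "\<dots> \<le> 12 * dpow (2/3 + \<gamma>)"
    using dpow_mono[of "2/3" "2/3 + \<gamma>"] gamma_pos by simp
  finally show ?thesis .
qed

lemma layer_widths_le:
  "real n1 \<le> 121 * dpow (5/3 + \<gamma>)" "real n2 \<le> 121 * dpow (5/3 + \<gamma>)"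
  "real n3 \<le> 121 * dpow (5/3 + \<gamma>)" "real n4 \<le> 121 * dpow (5/3 + \<gamma>)"
proof -
  have exponent_sum: "real d * dpow (2/3 + \<gamma>) = dpow (5/3 + \<gamma>)"
    using dpow_mult[of 1 "2/3 + \<gamma>"] by (simp add: algebra_simps)
  have dominated: "real d * dpow (2/3) \<le> dpow (5/3 + \<gamma>)" "dpow (2/3) * dpow (2/3 + \<gamma>) \<le> dpow (5/3 + \<gamma>)"
    "real d \<le> dpow (5/3 + \<gamma>)" "dpow (2/3 + \<gamma>) \<le> dpow (5/3 + \<gamma>)"
    using dpow_mult[of 1 "2/3"] dpow_mult[of "2/3" "2/3 + \<gamma>"] gamma_pos
      dpow_mono[of "5/3" "5/3 + \<gamma>"] dpow_mono[of "4/3 + \<gamma>" "5/3 + \<gamma>"]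
      dpow_mono[of 1 "5/3 + \<gamma>"] dpow_mono[of "2/3 + \<gamma>" "5/3 + \<gamma>"]
    by (simp_all add: algebra_simps)
  have nc: "0 \<le> real ncand" "real ncand \<le> 12 * dpow (2/3 + \<gamma>)" and bs: "real bs \<le> 2 * dpow (2/3)"
    using ncand_le_dpow bs_le_dpow by simp_all
  have "real n1 = 2 * real d * real bs + real d"
    by (simp add: n1_def M1_def)
  also have "\<dots> \<le> 2 * real d * (2 * dpow (2/3)) + real d"
    using bs by (intro add_mono mult_left_mono) auto
  finally show "real n1 \<le> 121 * dpow (5/3 + \<gamma>)"
    using dominated dpow_ge_1[of "5/3 + \<gamma>"] gamma_pos by simp
  have "real n2 = 5 * (real ncand * real bs) + real d"
    by (simp add: n2_def M2_def)
  also have "\<dots> \<le> 5 * ((12 * dpow (2/3 + \<gamma>)) * (2 * dpow (2/3))) + real d"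
    using nc bs by (intro add_mono mult_left_mono mult_mono) auto
  finally show "real n2 \<le> 121 * dpow (5/3 + \<gamma>)"
    using dominated by (simp add: algebra_simps)
  have "real n3 \<le> 4 * (real ncand * real d)"
    using mult_right_mono[of 1 "real d" "real ncand"] d_pos by (simp add: n3_def M3_def algebra_simps)
  also have "\<dots> \<le> 4 * (12 * dpow (2/3 + \<gamma>) * real d)"
    using nc by (intro mult_left_mono mult_right_mono) auto
  finally show "real n3 \<le> 121 * dpow (5/3 + \<gamma>)"
    using exponent_sum dpow_ge_1[of "5/3 + \<gamma>"] gamma_pos by (simp add: algebra_simps)
  show "real n4 \<le> 121 * dpow (5/3 + \<gamma>)"
    using nc dominated dpow_ge_1[of "2/3 + \<gamma>"] gamma_pos by (simp add: n4_def)
qed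

lemma net_width_median_network_le: "real (net_width median_network) \<le> 121 * dpow (5/3 + \<gamma>)"
proof -
  have "Max {0, n1, n2, n3, n4} \<in> {0, n1, n2, n3, n4}"
    by (rule Max_in) auto
  then have "net_width median_network \<in> {0, n1, n2, n3, n4}"
    by (simp add: net_width_def median_network_def)
  then show ?thesis
    using layer_widths_le dpow_ge_1[of "5/3 + \<gamma>"] gamma_pos by auto
qed


lemma network_exists:
  "\<exists>N. length (hidden_layers N) = 4 \<and>
       real (net_width N) \<le> 121 * real d powr (5/3 + \<gamma>) \<and>
       weights_bounded d N (1 / \<delta>) \<and>
       (\<forall>x. in_S d \<delta> x \<and> (\<forall>i<d. x i \<noteq> 0) \<and> success_cond \<gamma> d x \<longrightarrow> net_eval d N x = median d x) \<and>
       (\<forall>x. (\<forall>i<d. 0 \<le> x i \<and> x i \<le> 1) \<longrightarrow> net_eval d N x \<in> {- (real d ^ 2) .. real d ^ 2})"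
proof (cases "\<delta> * real d \<le> 1")
  case True
  then show ?thesis
    using net_width_median_network_le weights_bounded_median_network
      net_eval_median_network_eq_median net_eval_median_network_bounds
    by (intro exI[of _ median_network]) (auto simp: hidden_layers_def median_network_def admissible_def)
next
  case False
  then have "\<not> (in_S d \<delta> x \<and> (\<forall>i<d. x i \<noteq> 0))" for x
    using in_S_nonzero_delta_bound d_pos delta_pos by blast
  then show ?thesis
    using delta_pos by (intro exI[of _ zero_network]) (auto simp: zero_network_simps)
qed

end

theorem propositionC3:
  fixes \<gamma> :: real
  assumes "\<gamma> > 0"
  shows "\<exists>C > 0. \<forall>(d::nat) (\<delta>::real). d > 0 \<and> \<delta> > 0 \<longrightarrow>
           (\<exists>N :: relu_net.
              length (hidden_layers N) = 4 \<and>
              real (net_width N) \<le> C * real d powr (5/3 + \<gamma>) \<and>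
              weights_bounded d N (1 / \<delta>) \<and>
              (\<forall>x. in_S d \<delta> x \<and> (\<forall>i<d. x i \<noteq> 0) \<and> success_cond \<gamma> d x
                     \<longrightarrow> net_eval d N x = median d x) \<and>
              (\<forall>x. (\<forall>i<d. 0 \<le> x i \<and> x i \<le> 1)
                     \<longrightarrow> net_eval d N x \<in> {- (real d ^ 2) .. real d ^ 2}))"
  by (intro exI[of _ 121] conjI allI impI)
    (simp, elim conjE, rule median_net.network_exists[OF median_net.intro[OF assms]])

end
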